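(* Let $r\ge 1$, $N\ge 1$ and $n\ge 1$ be integers. Then $$B_{N,n}^{(r)}=n!\sum_{k=1}^{n}(-1)^k\sum_{\substack{e_1+\cdots+e_k=n\\ e_1,\dots,e_k\ge 1}}M_r(e_1)\cdots M_r(e_k),$$ where for an integer $e\ge 0$, $$M_r(e)=\sum_{\substack{i_1+\cdots+i_r=e\\ i_1,\dots,i_r\ge 0}}\frac{(N!)^r}{(N+i_1)!\cdots(N+i_r)!}.$$
   Context: For positive integers $N$ and $r$, the higher order hypergeometric Bernoulli numbers $B^{(r)}_{N,n}$ ($n\ge0$) are defined by $$\left(\frac{x^N/N!}{e^x-\sum_{n=0}^{N-1}x^n/n!}\right)^r=\sum_{n=0}^\infty B_{N,n}^{(r)}\frac{x^n}{n!}.$$ *)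

theory Defs
  imports "HOL-Computational_Algebra.Formal_Power_Series" "HOL-Library.FuncSet"
begin

definition hyp_bernoulli_gf :: "nat \<Rightarrow> nat \<Rightarrow> real fps" where
  "hyp_bernoulli_gf N r =
     (fps_const (1 / fact N) * fps_X ^ N /
       (fps_exp 1 - Abs_fps (\<lambda>n. if n < N then 1 / fact n else 0))) ^ r"

definition hyp_bernoulli :: "nat \<Rightarrow> nat \<Rightarrow> nat \<Rightarrow> real" where
  "hyp_bernoulli N r n = fact n * fps_nth (hyp_bernoulli_gf N r) n"

definition M_coeff :: "nat \<Rightarrow> nat \<Rightarrow> nat \<Rightarrow> real" where
  "M_coeff N r e =
     (\<Sum>i\<in>{i \<in> {..<r} \<rightarrow>\<^sub>E {..e}. (\<Sum>j<r. i j) = e}.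
        (fact N) ^ r / (\<Prod>j<r. fact (N + i j)))"

end

theory Submission
  imports Defs
begin

text \<open>Write the denominator e^x - (1 + x + ... + x^(N-1)/(N-1)!) as (x^N/N!) h(x) with
  h(x) = sum over i of N! x^i/(N+i)!. The generating function is then 1/h(x)^r, and M_r(e) is
  the coefficient of x^e in h(x)^r. Since h(x)^r = 1 + u(x) with u(0) = 0, the geometric
  series 1/(1+u) = sum over k of (-u)^k has only the terms k <= n in degree n, and the
  coefficient of x^n in u^k is the sum over the compositions of n into k positive parts.\<close>

unbundle fps_syntax

definition weak_compositions :: "nat \<Rightarrow> nat \<Rightarrow> (nat \<Rightarrow> nat) set" where
  "weak_compositions k n = {e \<in> {..<k} \<rightarrow>\<^sub>E {..n}. (\<Sum>j<k. e j) = n}"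

lemma finite_weak_compositions: "finite (weak_compositions k n)"
  unfolding weak_compositions_def
  by (rule finite_subset[of _ "{..<k} \<rightarrow>\<^sub>E {..n}"]) (auto intro: finite_PiE)

lemma bij_betw_weak_compositions_Suc:
  "bij_betw (\<lambda>(a, e). e(k := n - a))
     (SIGMA a:{0..n}. weak_compositions k a) (weak_compositions (Suc k) n)"
proof (rule bij_betw_byWitness[where f' = "\<lambda>e. (n - e k, e(k := undefined))"])
  show "\<forall>p\<in>(SIGMA a:{0..n}. weak_compositions k a).
          (\<lambda>e. (n - e k, e(k := undefined))) ((\<lambda>(a, e). e(k := n - a)) p) = p"
    by (auto simp: weak_compositions_def PiE_def extensional_def fun_upd_idem)
  show "\<forall>e\<in>weak_compositions (Suc k) n.
          (\<lambda>(a, e). e(k := n - a)) (n - e k, e(k := undefined)) = e"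
    by (auto simp: weak_compositions_def PiE_iff)
  show "(\<lambda>(a, e). e(k := n - a)) ` (SIGMA a:{0..n}. weak_compositions k a)
          \<subseteq> weak_compositions (Suc k) n"
  proof clarify
    fix a e assume a: "a \<in> {0..n}" and e: "e \<in> weak_compositions k a"
    then have "(\<Sum>j<Suc k. (e(k := n - a)) j) = n"
      by (simp add: weak_compositions_def sum.lessThan_Suc)
    with a e show "e(k := n - a) \<in> weak_compositions (Suc k) n"
      unfolding weak_compositions_def
      by (auto simp: PiE_iff extensional_def less_Suc_eq intro: order_trans)
  qed
  show "(\<lambda>e. (n - e k, e(k := undefined))) ` weak_compositions (Suc k) n
          \<subseteq> (SIGMA a:{0..n}. weak_compositions k a)"
  proof clarify
    fix e assume "e \<in> weak_compositions (Suc k) n"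
    then have e: "e \<in> {..<Suc k} \<rightarrow>\<^sub>E {..n}" and "(\<Sum>j<k. e j) + e k = n"
      by (simp_all add: weak_compositions_def)
    then have sum: "(\<Sum>j<k. e j) = n - e k" by simp
    have "e j \<le> n - e k" if "j < k" for j
      using member_le_sum[of j "{..<k}" e] that sum by simp
    with e sum show "n - e k \<in> {0..n} \<and> e(k := undefined) \<in> weak_compositions k (n - e k)"
      by (auto simp: weak_compositions_def PiE_iff extensional_def)
  qed
qed

lemma fps_prod_nth_weak_compositions:
  fixes F :: "nat \<Rightarrow> 'a::comm_ring_1 fps"
  shows "(\<Prod>j<k. F j) $ n = (\<Sum>e\<in>weak_compositions k n. \<Prod>j<k. F j $ e j)"
proof (induction k arbitrary: n)
  case 0
  have "weak_compositions 0 n = (if n = 0 then {\<lambda>_. undefined} else {})"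
    by (auto simp: weak_compositions_def)
  then show ?case by simp
next
  case (Suc k)
  have "(\<Prod>j<Suc k. F j) $ n = (\<Sum>a=0..n. (\<Prod>j<k. F j) $ a * F k $ (n - a))"
    by (simp add: fps_mult_nth)
  also have "\<dots> = (\<Sum>p\<in>(SIGMA a:{0..n}. weak_compositions k a).
                    (\<Prod>j<k. F j $ snd p j) * F k $ (n - fst p))"
    by (simp add: Suc.IH sum_distrib_right sum.Sigma finite_weak_compositions split_def)
  also have "\<dots> = (\<Sum>p\<in>(SIGMA a:{0..n}. weak_compositions k a).
                    (\<lambda>e. \<Prod>j<Suc k. F j $ e j) ((\<lambda>(a, e). e(k := n - a)) p))"
    by (intro sum.cong refl) (auto simp: prod.lessThan_Suc intro!: prod.cong)
  also have "\<dots> = (\<Sum>e\<in>weak_compositions (Suc k) n. \<Prod>j<Suc k. F j $ e j)"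
    by (rule sum.reindex_bij_betw[OF bij_betw_weak_compositions_Suc])
  finally show ?case .
qed

lemma fps_power_nth_compositions:
  fixes f :: "'a::comm_ring_1 fps"
  assumes "f $ 0 = 0"
  shows "(f ^ k) $ n =
    (\<Sum>e\<in>{e \<in> {..<k} \<rightarrow>\<^sub>E {1..n}. (\<Sum>j<k. e j) = n}. \<Prod>j<k. f $ e j)"
proof -
  have "(f ^ k) $ n = (\<Sum>e\<in>weak_compositions k n. \<Prod>j<k. f $ e j)"
    using fps_prod_nth_weak_compositions[of "\<lambda>_. f" k n] by simp
  also have "\<dots> = (\<Sum>e\<in>{e \<in> {..<k} \<rightarrow>\<^sub>E {1..n}. (\<Sum>j<k. e j) = n}. \<Prod>j<k. f $ e j)"
  proof (rule sum.mono_neutral_right[OF finite_weak_compositions])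
    show "{e \<in> {..<k} \<rightarrow>\<^sub>E {1..n}. (\<Sum>j<k. e j) = n} \<subseteq> weak_compositions k n"
      by (auto simp: weak_compositions_def PiE_iff)
    show "\<forall>e\<in>weak_compositions k n - {e \<in> {..<k} \<rightarrow>\<^sub>E {1..n}. (\<Sum>j<k. e j) = n}.
            (\<Prod>j<k. f $ e j) = 0"
    proof
      fix e assume "e \<in> weak_compositions k n - {e \<in> {..<k} \<rightarrow>\<^sub>E {1..n}. (\<Sum>j<k. e j) = n}"
      then obtain i where "i < k" "e i = 0"
        by (auto simp: weak_compositions_def PiE_iff Suc_le_eq)
      with assms show "(\<Prod>j<k. f $ e j) = 0"
        by (intro prod_zero) (auto intro!: bexI[of _ i])
    qed
  qed
  finally show ?thesis .
qed

lemma fps_minus_power_nth: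
  fixes u :: "'a::comm_ring_1 fps"
  shows "((- u) ^ k) $ n = (-1) ^ k * (u ^ k) $ n"
  by (induction k arbitrary: n) (simp_all add: fps_mult_nth sum_distrib_left sum_negf mult_ac)

lemma fps_inverse_nth_geometric:
  fixes P :: "'a::field fps"
  assumes "P $ 0 = 1" and "n \<ge> 1"
  shows "inverse P $ n = (\<Sum>k=1..n. (-1) ^ k * ((P - 1) ^ k) $ n)"
proof -
  define u where "u = P - 1"
  have u0: "u $ 0 = 0" using assms(1) by (simp add: u_def)
  define v where "v = (\<Sum>k<Suc n. (- u) ^ k)"
  define w where "w = (- u) ^ Suc n"
  have "1 - w = (1 - (- u)) * v"
    unfolding v_def w_def by (rule one_diff_power_eq)
  then have "P * v + w = 1"
    by (simp add: u_def algebra_simps)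
  then have "inverse P = inverse P * (P * v + w)" by simp
  also have "\<dots> = v + inverse P * w"
    using assms(1) by (simp add: distrib_left inverse_mult_eq_1 flip: mult.assoc)
  finally have inv: "inverse P = v + inverse P * w" .
  have "w $ j = 0" if "j \<le> n" for j
    using startsby_zero_power_prefix[of "- u" "Suc n"] u0 that by (simp add: w_def)
  then have "(inverse P * w) $ n = 0"
    by (simp add: fps_mult_nth)
  then have "inverse P $ n = v $ n" by (subst inv) simp
  also have "\<dots> = (\<Sum>k<Suc n. (-1) ^ k * (u ^ k) $ n)"
    by (simp add: v_def fps_sum_nth fps_minus_power_nth)
  also have "\<dots> = (\<Sum>k=1..n. (-1) ^ k * (u ^ k) $ n)"
    using assms(2) by (simp add: lessThan_Suc_atMost atMost_atLeast0 sum.atLeast_Suc_atMost)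
  finally show ?thesis by (simp add: u_def)
qed

definition hyp_exp_fps :: "nat \<Rightarrow> real fps" where
  "hyp_exp_fps N = Abs_fps (\<lambda>i. fact N / fact (N + i))"

lemma M_coeff_eq_power_nth: "M_coeff N r e = (hyp_exp_fps N ^ r) $ e"
  using fps_prod_nth_weak_compositions[of "\<lambda>_. hyp_exp_fps N" r e]
  by (simp add: M_coeff_def weak_compositions_def hyp_exp_fps_def prod_dividef)

lemma hyp_bernoulli_gf_eq_inverse:
  "hyp_bernoulli_gf N r = inverse (hyp_exp_fps N ^ r)"
proof -
  define A where "A = fps_const (1 / fact N :: real) * fps_X ^ N"
  define D where "D = fps_exp 1 - Abs_fps (\<lambda>n. if n < N then 1 / fact n else 0 :: real)"
  have "D = A * hyp_exp_fps N"
  proof (rule fps_ext)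
    fix m
    show "D $ m = (A * hyp_exp_fps N) $ m"
      by (cases "m < N")
         (simp_all add: D_def A_def hyp_exp_fps_def fps_exp_def mult.assoc fps_X_power_mult_nth)
  qed
  moreover have "A \<noteq> 0"
    using fps_nonzeroI[of A N] by (simp add: A_def)
  ultimately have "A / D = inverse (hyp_exp_fps N)"
    by (simp add: fps_divide_unit hyp_exp_fps_def)
  then show ?thesis
    by (simp add: hyp_bernoulli_gf_def A_def D_def fps_inverse_power)
qed

theorem proposition7:
  fixes r N n :: nat
  assumes "r \<ge> 1" and "N \<ge> 1" and "n \<ge> 1"
  shows "hyp_bernoulli N r n =
    fact n * (\<Sum>k=1..n. (-1) ^ k *
      (\<Sum>e\<in>{e \<in> {..<k} \<rightarrow>\<^sub>E {1..n}. (\<Sum>j<k. e j) = n}.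
         (\<Prod>j<k. M_coeff N r (e j))))"
proof -
  define P where "P = hyp_exp_fps N ^ r"
  have P0: "P $ 0 = 1" by (simp add: P_def hyp_exp_fps_def fps_power_zeroth)
  have "hyp_bernoulli N r n = fact n * (\<Sum>k=1..n. (-1) ^ k * ((P - 1) ^ k) $ n)"
    by (simp add: hyp_bernoulli_def hyp_bernoulli_gf_eq_inverse
        fps_inverse_nth_geometric[OF P0 assms(3)] flip: P_def)
  also have "\<dots> = fact n * (\<Sum>k=1..n. (-1) ^ k *
      (\<Sum>e\<in>{e \<in> {..<k} \<rightarrow>\<^sub>E {1..n}. (\<Sum>j<k. e j) = n}. \<Prod>j<k. M_coeff N r (e j)))"
    using P0 by (auto simp: fps_power_nth_compositions M_coeff_eq_power_nth P_def PiE_iff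
        Suc_le_eq intro!: sum.cong prod.cong)
  finally show ?thesis .
qed

end
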